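(* Let $\mathcal{S}_1=\langle\mathcal{L},\vdash_1\rangle$ and $\mathcal{S}_2=\langle\mathcal{L},\vdash_2\rangle$ be logics with $\vdash_1\,\subseteq\,\vdash_2$. Then $\vdash_1^l\,\subseteq\,\vdash_2^l$. Moreover, if $\mathcal{S}_1$ and $\mathcal{S}_2$ are Hilbert-style logics such that for every rule $(\Gamma,\alpha)$ of the restricted rules companion $\mathcal{S}_1^{re}$ one has $\Gamma\vdash_2^{re}\alpha$, then $\vdash_1^{re}\,\subseteq\,\vdash_2^{re}$.
   Context: A logic is a pair $\langle\mathcal{L},\vdash\rangle$ where $\mathcal{L}$ is the formula algebra over a set of variables $V$ of some finite signature and $\vdash\subseteq\mathcal{P}(\mathcal{L})\times\mathcal{L}$ is arbitrary. $\mathrm{var}(\alpha)$ is the set of variables in $\alpha$, $\mathrm{var}(\Delta)=\bigcup_{\alpha\in\Delta}\mathrm{var}(\alpha)$. Left variable inclusion companion: $\Gamma\vdash^l\alpha$ iff there is $\Delta\subseteq\Gamma$ with $\mathrm{var}(\Delta)\subseteq\mathrm{var}(\alpha)$ and $\Delta\vdash\alpha$. A Hilbert-style logic is given by axioms $A\subseteq\mathcal{L}$ and rules $R\subseteq\mathcal{P}(\mathcal{L})\times\mathcal{L}$: $\Sigma\vdash\alpha$ iff there is a finite sequence $\alpha_1,\ldots,\alpha_n=\alpha$ with each $\alpha_i\in A$, or $\alpha_i\in\Sigma$, or $(\Delta,\alpha_i)\in R$ for some $\Delta\subseteq\{\alpha_1,\ldots,\alpha_{i-1}\}$. Its restricted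 rules companion $\mathcal{S}^{re}=\langle\mathcal{L},\vdash^{re}\rangle$ is the Hilbert-style logic with axioms $A$ and rules $R_{\mathcal{S}^{re}}=\{(\Gamma,\alpha)\in R\mid\mathrm{var}(\Gamma)\subseteq\mathrm{var}(\alpha)\}$. *)

theory Defs
  imports Main
begin

text \<open>The set of formulas L is the set of well-formed terms.\<close>

datatype ('v, 's) form = Var 'v | Op 's "('v, 's) form list"

inductive_set formulas :: "('s \<Rightarrow> nat) \<Rightarrow> ('v, 's) form set" for ar where
  var_wf: "Var x \<in> formulas ar"
| op_wf: "\<lbrakk>length args = ar c; \<forall>a \<in> set args. a \<in> formulas ar\<rbrakk> \<Longrightarrow> Op c args \<in> formulas ar"

fun var :: "('v, 's) form \<Rightarrow> 'v set" where
  "var (Var x) = {x}"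
| "var (Op c args) = (\<Union>a \<in> set args. var a)"

definition vars :: "('v, 's) form set \<Rightarrow> 'v set" where
  "vars \<Delta> = (\<Union>\<alpha> \<in> \<Delta>. var \<alpha>)"

definition is_logic :: "('v, 's) form set \<Rightarrow> (('v, 's) form set \<times> ('v, 's) form) set \<Rightarrow> bool" where
  "is_logic L C \<longleftrightarrow> C \<subseteq> Pow L \<times> L"

definition lvi :: "(('v, 's) form set \<times> ('v, 's) form) set \<Rightarrow> (('v, 's) form set \<times> ('v, 's) form) set" where
  "lvi C = {(\<Gamma>, \<alpha>). \<exists>\<Delta> \<subseteq> \<Gamma>. vars \<Delta> \<subseteq> var \<alpha> \<and> (\<Delta>, \<alpha>) \<in> C}"

definition hilbert :: "('v, 's) form set \<Rightarrow> ('v, 's) form set \<Rightarrow> (('v, 's) form set \<times> ('v, 's) form) set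
    \<Rightarrow> (('v, 's) form set \<times> ('v, 's) form) set" where
  "hilbert L A R = {(\<Sigma>, \<alpha>). \<Sigma> \<subseteq> L \<and> \<alpha> \<in> L \<and>
     (\<exists>xs. xs \<noteq> [] \<and> last xs = \<alpha> \<and>
        (\<forall>i < length xs. xs ! i \<in> A \<or> xs ! i \<in> \<Sigma> \<or>
            (\<exists>\<Delta>. (\<Delta>, xs ! i) \<in> R \<and> \<Delta> \<subseteq> set (take i xs))))}"

definition restrict_rules :: "(('v, 's) form set \<times> ('v, 's) form) set \<Rightarrow> (('v, 's) form set \<times> ('v, 's) form) set" where
  "restrict_rules R = {(\<Gamma>, \<alpha>) \<in> R. vars \<Gamma> \<subseteq> var \<alpha>}"

definition hilbert_re :: "('v, 's) form set \<Rightarrow> ('v, 's) form set \<Rightarrow> (('v, 's) form set \<times> ('v, 's) form) set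
    \<Rightarrow> (('v, 's) form set \<times> ('v, 's) form) set" where
  "hilbert_re L A R = hilbert L A (restrict_rules R)"

end

theory Submission
  imports Defs
begin

text \<open>The first claim holds because lvi is monotone in the consequence relation. For the
second, a derivation in the first restricted companion is simulated step by step in the
second: every axiom or restricted rule application of the first system is replaced by a
derivation of it in the second. The simulating derivations can simply be concatenated,
since a step of a derivation stays justified when further formulas are placed before it.\<close>

lemma lvi_mono: "C1 \<subseteq> C2 \<Longrightarrow> lvi C1 \<subseteq> lvi C2"
  unfolding lvi_def by blast

definition justified ::
    "('v, 's) form set \<Rightarrow> (('v, 's) form set \<times> ('v, 's) form) set \<Rightarrow> ('v, 's) form set
      \<Rightarrow> ('v, 's) form set \<Rightarrow> ('v, 's) form \<Rightarrow> bool" where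
  "justified A R \<Sigma> T \<alpha> \<longleftrightarrow> \<alpha> \<in> A \<or> \<alpha> \<in> \<Sigma> \<or> (\<exists>\<Delta>. (\<Delta>, \<alpha>) \<in> R \<and> \<Delta> \<subseteq> T)"

definition derivation ::
    "('v, 's) form set \<Rightarrow> (('v, 's) form set \<times> ('v, 's) form) set \<Rightarrow> ('v, 's) form set
      \<Rightarrow> ('v, 's) form list \<Rightarrow> bool" where
  "derivation A R \<Sigma> xs \<longleftrightarrow> (\<forall>i < length xs. justified A R \<Sigma> (set (take i xs)) (xs ! i))"

definition derives ::
    "('v, 's) form set \<Rightarrow> (('v, 's) form set \<times> ('v, 's) form) set \<Rightarrow> ('v, 's) form set
      \<Rightarrow> ('v, 's) form \<Rightarrow> bool" where
  "derives A R \<Sigma> \<alpha> \<longleftrightarrow> (\<exists>xs. derivation A R \<Sigma> xs \<and> \<alpha> \<in> set xs)"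

lemma justified_mono:
  "justified A R \<Sigma> T \<alpha> \<Longrightarrow> \<Sigma> \<subseteq> \<Sigma>' \<Longrightarrow> T \<subseteq> T' \<Longrightarrow> justified A R \<Sigma>' T' \<alpha>"
  unfolding justified_def by blast

lemma derivation_Nil [simp]: "derivation A R \<Sigma> []"
  unfolding derivation_def by simp

lemma derivation_snoc [simp]:
  "derivation A R \<Sigma> (xs @ [x]) \<longleftrightarrow> derivation A R \<Sigma> xs \<and> justified A R \<Sigma> (set xs) x"
  unfolding derivation_def by (auto simp: nth_append less_Suc_eq)

lemma derivation_take: "derivation A R \<Sigma> xs \<Longrightarrow> derivation A R \<Sigma> (take n xs)"
  unfolding derivation_def by (auto simp: min_def)

lemma derivation_mono: "derivation A R \<Sigma> xs \<Longrightarrow> \<Sigma> \<subseteq> \<Sigma>' \<Longrightarrow> derivation A R \<Sigma>' xs"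
  unfolding derivation_def using justified_mono by blast

lemma derivation_append:
  assumes "derivation A R \<Sigma> ws"
  shows "derivation A R (\<Sigma> \<union> set ws) zs \<Longrightarrow> derivation A R \<Sigma> (ws @ zs)"
proof (induction zs rule: rev_induct)
  case Nil
  then show ?case using assms by simp
next
  case (snoc z zs)
  then have "derivation A R \<Sigma> (ws @ zs)" by simp
  moreover have "justified A R \<Sigma> (set (ws @ zs)) z"
  proof (cases "z \<in> set ws")
    case True
    then obtain i where "i < length ws" "ws ! i = z" by (meson in_set_conv_nth)
    with assms have "justified A R \<Sigma> (set (take i ws)) z"
      unfolding derivation_def by blast
    then show ?thesis by (rule justified_mono) (auto dest: in_set_takeD)
  next
    case False
    with snoc.prems have "justified A R (\<Sigma> \<union> set ws) (set zs) z" by simp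
    with False show ?thesis unfolding justified_def by auto
  qed
  ultimately show ?case by (simp flip: append_assoc)
qed

lemma hilbert_iff_derives:
  "(\<Sigma>, \<alpha>) \<in> hilbert L A R \<longleftrightarrow> \<Sigma> \<subseteq> L \<and> \<alpha> \<in> L \<and> derives A R \<Sigma> \<alpha>"
proof -
  have "(\<exists>xs. xs \<noteq> [] \<and> last xs = \<alpha> \<and> derivation A R \<Sigma> xs) \<longleftrightarrow> derives A R \<Sigma> \<alpha>"
  proof
    assume "derives A R \<Sigma> \<alpha>"
    then obtain xs i where xs: "derivation A R \<Sigma> xs" "i < length xs" "xs ! i = \<alpha>"
      unfolding derives_def by (meson in_set_conv_nth)
    then have "take (Suc i) xs \<noteq> [] \<and> last (take (Suc i) xs) = \<alpha>"
      by (simp add: take_Suc_conv_app_nth)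
    with derivation_take[OF xs(1)]
    show "\<exists>xs. xs \<noteq> [] \<and> last xs = \<alpha> \<and> derivation A R \<Sigma> xs" by blast
  qed (auto simp: derives_def)
  moreover have "(\<Sigma>, \<alpha>) \<in> hilbert L A R \<longleftrightarrow>
      \<Sigma> \<subseteq> L \<and> \<alpha> \<in> L \<and> (\<exists>xs. xs \<noteq> [] \<and> last xs = \<alpha> \<and> derivation A R \<Sigma> xs)"
    unfolding hilbert_def derivation_def justified_def by simp
  ultimately show ?thesis by simp
qed

lemma derives_premise: "\<alpha> \<in> \<Sigma> \<Longrightarrow> derives A R \<Sigma> \<alpha>"
  unfolding derives_def by (intro exI[of _ "[\<alpha>]"]) (simp add: derivation_def justified_def)

lemma derivation_simulation:
  assumes axioms: "\<forall>\<alpha> \<in> A1. derives A2 R2 {} \<alpha>"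
    and rules: "\<forall>(\<Gamma>, \<alpha>) \<in> R1. derives A2 R2 \<Gamma> \<alpha>"
  shows "derivation A1 R1 \<Sigma> xs \<Longrightarrow> \<exists>ws. derivation A2 R2 \<Sigma> ws \<and> set xs \<subseteq> set ws"
proof (induction xs rule: rev_induct)
  case Nil
  show ?case by (intro exI[of _ "[]"]) simp
next
  case (snoc x xs)
  then obtain ws where ws: "derivation A2 R2 \<Sigma> ws" "set xs \<subseteq> set ws" by auto
  from snoc.prems have "justified A1 R1 \<Sigma> (set xs) x" by simp
  then obtain \<Delta> where "\<Delta> \<subseteq> \<Sigma> \<union> set ws" "derives A2 R2 \<Delta> x"
  proof (unfold justified_def, elim disjE exE conjE)
    assume "x \<in> A1"
    with axioms show thesis using that[of "{}"] by blast
  next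
    assume "x \<in> \<Sigma>"
    then show thesis using that[of "{x}"] derives_premise by blast
  next
    fix \<Delta>
    assume "(\<Delta>, x) \<in> R1" "\<Delta> \<subseteq> set xs"
    with rules ws(2) show thesis using that[of \<Delta>] by blast
  qed
  then obtain zs where "derivation A2 R2 (\<Sigma> \<union> set ws) zs" "x \<in> set zs"
    unfolding derives_def using derivation_mono by blast
  with ws show ?case using derivation_append by (intro exI[of _ "ws @ zs"]) auto
qed

lemma hilbert_subset_hilbert:
  assumes "\<forall>\<alpha> \<in> A1. ({}, \<alpha>) \<in> hilbert L A2 R2"
    and "\<forall>(\<Gamma>, \<alpha>) \<in> R1. (\<Gamma>, \<alpha>) \<in> hilbert L A2 R2"
  shows "hilbert L A1 R1 \<subseteq> hilbert L A2 R2"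
proof clarify
  fix \<Sigma> \<alpha>
  assume "(\<Sigma>, \<alpha>) \<in> hilbert L A1 R1"
  then obtain xs where in_L: "\<Sigma> \<subseteq> L" "\<alpha> \<in> L"
    and xs: "derivation A1 R1 \<Sigma> xs" "\<alpha> \<in> set xs"
    unfolding hilbert_iff_derives derives_def by blast
  have "\<forall>\<alpha> \<in> A1. derives A2 R2 {} \<alpha>" "\<forall>(\<Gamma>, \<alpha>) \<in> R1. derives A2 R2 \<Gamma> \<alpha>"
    using assms by (auto simp: hilbert_iff_derives)
  from derivation_simulation[OF this xs(1)]
  obtain ws where "derivation A2 R2 \<Sigma> ws" "set xs \<subseteq> set ws" by blast
  with xs(2) have "derives A2 R2 \<Sigma> \<alpha>" unfolding derives_def by blast
  with in_L show "(\<Sigma>, \<alpha>) \<in> hilbert L A2 R2" by (simp add: hilbert_iff_derives)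
qed

theorem theorem2p5:
  fixes ar :: "'s::finite \<Rightarrow> nat"
    and C1 C2 :: "(('v, 's) form set \<times> ('v, 's) form) set"
    and A1 A2 :: "('v, 's) form set"
    and R1 R2 :: "(('v, 's) form set \<times> ('v, 's) form) set"
  defines "L \<equiv> formulas ar"
  shows "(is_logic L C1 \<and> is_logic L C2 \<and> C1 \<subseteq> C2 \<longrightarrow> lvi C1 \<subseteq> lvi C2)
       \<and> (A1 \<subseteq> L \<and> R1 \<subseteq> Pow L \<times> L \<and> A2 \<subseteq> L \<and> R2 \<subseteq> Pow L \<times> L \<and>
          hilbert L A1 R1 \<subseteq> hilbert L A2 R2 \<and>
          (\<forall>\<alpha> \<in> A1. ({}, \<alpha>) \<in> hilbert_re L A2 R2) \<and>
          (\<forall>(\<Gamma>, \<alpha>) \<in> restrict_rules R1. (\<Gamma>, \<alpha>) \<in> hilbert_re L A2 R2)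
         \<longrightarrow> hilbert_re L A1 R1 \<subseteq> hilbert_re L A2 R2)"
proof -
  have "lvi C1 \<subseteq> lvi C2" if "C1 \<subseteq> C2"
    using that by (rule lvi_mono)
  moreover have "hilbert_re L A1 R1 \<subseteq> hilbert_re L A2 R2"
    if "\<forall>\<alpha> \<in> A1. ({}, \<alpha>) \<in> hilbert_re L A2 R2"
      and "\<forall>(\<Gamma>, \<alpha>) \<in> restrict_rules R1. (\<Gamma>, \<alpha>) \<in> hilbert_re L A2 R2"
    using that unfolding hilbert_re_def by (rule hilbert_subset_hilbert)
  ultimately show ?thesis by blast
qed

end
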